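(* Let $\omega\ge 3$, $m\ge 0$, $1\le k\le\lfloor(\omega-2)/2\rfloor$, and let $G$ be the group with presentation $$\langle \alpha,\beta\mid (\beta\alpha)^{k}\beta = \{(\beta\alpha)^k\beta^{\omega-2k}[(\beta\alpha)^k\beta\alpha^{-1}(\alpha\beta)^{-k}]^{-\omega+k}\}^m(\alpha\beta)^{k}\alpha\rangle.$$ For any homomorphism $\Phi:G\to\mathrm{Homeo}^+(\mathbb{R})$, if $\Phi(\alpha)(t)>t$ for all $t\in\mathbb{R}$, then $\Phi(\beta)(t)\ge t$ for all $t\in\mathbb{R}$.
   Context: $\mathrm{Homeo}^+(\mathbb{R})$ is the group of order-preserving homeomorphisms of $\mathbb{R}$. (This $G$ is the knot group of the closure of the braid $(\sigma_1\cdots\sigma_{2k})(\sigma_1\cdots\sigma_{\omega-1})^{1+m\omega}$.) *)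

theory Defs
  imports "HOL-Analysis.Analysis"
begin

text \<open>Homeo+(R): order-preserving homeomorphisms of the real line, as a group
  under composition (group product g h corresponds to g \<circ> h).\<close>
definition homeo_plus :: "(real \<Rightarrow> real) set" where
  "homeo_plus = {f. homeomorphism UNIV UNIV f (inv f) \<and> mono f}"

definition ipow :: "(real \<Rightarrow> real) \<Rightarrow> int \<Rightarrow> (real \<Rightarrow> real)" where
  "ipow f n = (if 0 \<le> n then f ^^ nat n else (inv f) ^^ nat (- n))"

text \<open>The defining relation of G, evaluated at images a = Phi(alpha), b = Phi(beta).
  A homomorphism G \<rightarrow> Homeo+(R) is exactly a pair (a,b) in Homeo+(R) satisfying it.\<close>
definition rel_holds :: "nat \<Rightarrow> nat \<Rightarrow> nat \<Rightarrow> (real \<Rightarrow> real) \<Rightarrow> (real \<Rightarrow> real) \<Rightarrow> bool" where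
  "rel_holds \<omega> m k a b \<longleftrightarrow>
     (let Y = ipow (b \<circ> a) (int k) \<circ> b \<circ> ipow a (-1) \<circ> ipow (a \<circ> b) (- int k);
          X = ipow (b \<circ> a) (int k) \<circ> ipow b (int \<omega> - 2 * int k) \<circ> ipow Y (- int \<omega> + int k)
      in ipow (b \<circ> a) (int k) \<circ> b = ipow X (int m) \<circ> ipow (a \<circ> b) (int k) \<circ> a)"

end

theory Submission
  imports Defs
begin

text \<open>Write \<open>c = (\<beta>\<alpha>)^k\<close> and let \<open>X = c \<beta>^(\<omega>-2k) Y^-(\<omega>-k)\<close> be the base of the power in
  the relation, \<open>Y\<close> being the bracketed element. Since \<open>(\<alpha>\<beta>)^k \<alpha> = \<alpha> c\<close>, the relation
  reads \<open>c \<beta> = X^m \<alpha> c\<close> and forces \<open>Y = X^m\<close>, hence \<open>X^N = c \<beta>^(\<omega>-2k)\<close> with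
  \<open>N = 1 + m(\<omega>-k)\<close>; together these exhibit \<open>\<beta>\<close> as the conjugate \<open>X^-N X^m \<alpha> X^N\<close>.
  In \<open>Homeo\<^sup>+(\<real>)\<close>, composing on the right with \<open>\<beta>\<close> therefore raises the
  "\<open>X\<close>-exponent" of a map by \<open>m\<close> up to an expanding factor, and composing with \<open>\<alpha>\<close>
  does not lower it. The word \<open>X^N = c \<beta>^(\<omega>-2k)\<close> thus has \<open>X\<close>-exponent \<open>N - 1\<close>,
  which forces \<open>X \<ge> id\<close>. Then \<open>c \<beta> = X^m \<alpha> c \<ge> \<alpha> c > c\<close>, so \<open>\<beta> > id\<close>.\<close>

lemma ipow_of_nat [simp]: "ipow f (int n) = f ^^ n"
  by (simp add: ipow_def)

lemma ipow_0 [simp]: "ipow f 0 = id"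
  by (simp add: ipow_def)

lemma ipow_1: "ipow f 1 = f"
  by (simp add: ipow_def)

lemma ipow_nonpos: "j \<le> 0 \<Longrightarrow> ipow f j = inv f ^^ nat (- j)"
  by (cases "j = 0") (auto simp: ipow_def)

lemma ipow_succ:
  assumes "bij f"
  shows "ipow f (i + 1) = ipow f i \<circ> f"
proof (cases "0 \<le> i")
  case True
  then have "nat (i + 1) = Suc (nat i)" by simp
  with True show ?thesis by (simp add: ipow_def funpow_Suc_right del: funpow.simps)
next
  case False
  then have "nat (- i) = Suc (nat (- (i + 1)))" by simp
  with False have "ipow f i = inv f ^^ nat (- (i + 1)) \<circ> inv f"
    by (simp add: ipow_nonpos funpow_Suc_right del: funpow.simps)
  then have "ipow f i \<circ> f = inv f ^^ nat (- (i + 1))"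
    using assms by (simp add: comp_assoc bij_is_inj)
  with False show ?thesis by (simp add: ipow_nonpos)
qed

lemma ipow_pred:
  assumes "bij f"
  shows "ipow f (i - 1) = ipow f i \<circ> inv f"
proof -
  have "ipow f i \<circ> inv f = ipow f (i - 1) \<circ> (f \<circ> inv f)"
    using ipow_succ[OF assms, of "i - 1"] by (simp add: comp_assoc)
  moreover have "f \<circ> inv f = id" using assms bij_is_surj surj_iff by blast
  ultimately show ?thesis by simp
qed

lemma ipow_add:
  assumes "bij f"
  shows "ipow f (i + j) = ipow f i \<circ> ipow f j"
proof (induction j rule: int_induct[where k = 0])
  case base
  show ?case by simp
next
  case (step1 j)
  then show ?case
    using ipow_succ[OF assms, of "i + j"] ipow_succ[OF assms, of j]
    by (simp add: add.assoc comp_assoc)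
next
  case (step2 j)
  then show ?case
    using ipow_pred[OF assms, of "i + j"] ipow_pred[OF assms, of j]
    by (simp add: algebra_simps comp_assoc)
qed

lemma ipow_neg_cancel:
  assumes "bij f"
  shows "ipow f (- j) (ipow f j x) = x"
  using ipow_add[OF assms, of "- j" j] by (simp add: fun_eq_iff)

lemma ipow_cancel_neg:
  assumes "bij f"
  shows "ipow f j (ipow f (- j) x) = x"
  using ipow_add[OF assms, of j "- j"] by (simp add: fun_eq_iff)

lemma bij_ipow:
  assumes "bij f"
  shows "bij (ipow f j)"
  using assms bij_imp_bij_inv bij_betw_funpow unfolding ipow_def by auto

lemma mono_ipow:
  fixes f :: "real \<Rightarrow> real"
  assumes "bij f" and "mono f"
  shows "mono (ipow f j)"
  using mono_pow[OF assms(2)] mono_pow[OF mono_inv[OF assms(2,1)]]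
  unfolding ipow_def by auto

lemma homeo_plus_bij:
  assumes "f \<in> homeo_plus"
  shows "bij f"
proof (rule o_bij)
  show "inv f \<circ> f = id" and "f \<circ> inv f = id"
    using assms unfolding homeo_plus_def homeomorphism_def by (auto simp: fun_eq_iff)
qed

lemma homeo_plus_mono: "f \<in> homeo_plus \<Longrightarrow> mono f"
  unfolding homeo_plus_def by simp

lemma mono_comp:
  fixes f :: "'b::order \<Rightarrow> 'c::order" and g :: "'a::order \<Rightarrow> 'b"
  assumes "mono f" and "mono g"
  shows "mono (f \<circ> g)"
  using assms by (simp add: mono_def)

lemma funpow_expanding:
  fixes f :: "'a::preorder \<Rightarrow> 'a"
  assumes "\<And>t. t \<le> f t"
  shows "t \<le> (f ^^ n) t"
  by (induction n) (auto intro: order_trans assms)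

lemma funpow_comp_swap: "(f \<circ> g) ^^ n \<circ> f = f \<circ> (g \<circ> f) ^^ n"
proof -
  have "((f \<circ> g) ^^ n) (f x) = f (((g \<circ> f) ^^ n) x)" for x
    by (induction n) auto
  then show ?thesis by (simp add: fun_eq_iff)
qed

text \<open>A one-sided comparison "\<open>g \<ge> V\<^sup>e\<close>" that is stable under composition on the
  right: powers of \<open>V\<close> shift \<open>e\<close>, and expanding monotone maps are absorbed into \<open>h\<close>
  after conjugation by \<open>V\<^sup>e\<close>.\<close>
definition above_ipow :: "(real \<Rightarrow> real) \<Rightarrow> int \<Rightarrow> (real \<Rightarrow> real) \<Rightarrow> bool" where
  "above_ipow V e g \<longleftrightarrow> (\<exists>h. mono h \<and> (\<forall>t. t \<le> h t) \<and> g = h \<circ> ipow V e)"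

lemma above_ipow_id: "above_ipow V 0 id"
  unfolding above_ipow_def by (rule exI[of _ id]) (simp add: mono_def)

lemma above_ipow_comp_ipow:
  assumes "bij V" and "above_ipow V e g"
  shows "above_ipow V (e + j) (g \<circ> ipow V j)"
  using assms(2) unfolding above_ipow_def by (auto simp: ipow_add[OF assms(1)] comp_assoc)

lemma above_ipow_comp_expanding:
  assumes V: "bij V" "mono V" and a: "mono a" "\<And>t. t \<le> a t" and "above_ipow V e g"
  shows "above_ipow V e (g \<circ> a)"
proof -
  obtain h where h: "mono h" "\<And>t. t \<le> h t" and g: "g = h \<circ> ipow V e"
    using assms(5) unfolding above_ipow_def by blast
  define h' where "h' = h \<circ> ipow V e \<circ> a \<circ> ipow V (- e)"
  have "mono h'"
    unfolding h'_def by (intro mono_comp mono_ipow V h(1) a(1))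
  moreover have "t \<le> h' t" for t
  proof -
    have "t = ipow V e (ipow V (- e) t)" by (simp add: ipow_cancel_neg[OF V(1)])
    also have "\<dots> \<le> ipow V e (a (ipow V (- e) t))" using mono_ipow[OF V] a(2) by (simp add: monoD)
    also have "\<dots> \<le> h' t" unfolding h'_def using h(2) by simp
    finally show ?thesis .
  qed
  moreover have "g \<circ> a = h' \<circ> ipow V e"
    unfolding h'_def g by (simp add: fun_eq_iff ipow_neg_cancel[OF V(1)])
  ultimately show ?thesis unfolding above_ipow_def by blast
qed

lemma above_ipow_comp_conjugate:
  assumes V: "bij V" "mono V" and a: "mono a" "\<And>t. t \<le> a t" and "above_ipow V e g"
  shows "above_ipow V (e + q) (g \<circ> (ipow V (- p) \<circ> ipow V q \<circ> a \<circ> ipow V p))"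
proof -
  have "above_ipow V (e + - p + q) (g \<circ> ipow V (- p) \<circ> ipow V q)"
    by (intro above_ipow_comp_ipow V(1) assms(5))
  then have "above_ipow V (e + - p + q) (g \<circ> ipow V (- p) \<circ> ipow V q \<circ> a)"
    by (rule above_ipow_comp_expanding[OF V a])
  then have "above_ipow V (e + - p + q + p) (g \<circ> ipow V (- p) \<circ> ipow V q \<circ> a \<circ> ipow V p)"
    by (rule above_ipow_comp_ipow[OF V(1)])
  then show ?thesis by (simp add: comp_assoc)
qed

lemma above_ipow_comp_funpow:
  assumes step: "\<And>e g. above_ipow V e g \<Longrightarrow> above_ipow V (e + q) (g \<circ> f)"
    and "above_ipow V e g"
  shows "above_ipow V (e + int n * q) (g \<circ> f ^^ n)"
proof (induction n)
  case 0
  show ?case using assms(2) by simp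
next
  case (Suc n)
  have "above_ipow V (e + int n * q + q) (g \<circ> f ^^ n \<circ> f)" by (rule step[OF Suc])
  moreover have "g \<circ> f ^^ n \<circ> f = g \<circ> f ^^ Suc n"
    by (simp add: funpow_Suc_right comp_assoc del: funpow.simps)
  moreover have "e + int n * q + q = e + int (Suc n) * q" by (simp add: algebra_simps)
  ultimately show ?case by (simp only:)
qed

lemma expanding_if_above_ipow_succ:
  assumes "bij V" and "above_ipow V e (ipow V (e + 1))"
  shows "t \<le> V t"
proof -
  obtain h where h: "\<And>t. t \<le> h t" and eq: "ipow V (e + 1) = h \<circ> ipow V e"
    using assms(2) unfolding above_ipow_def by blast
  have "V \<circ> ipow V e = h \<circ> ipow V e"
    using eq ipow_add[OF assms(1), of 1 e] by (simp add: ipow_1 add.commute)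
  then have "V (ipow V e (ipow V (- e) t)) = h (ipow V e (ipow V (- e) t))"
    by (metis comp_apply)
  then show ?thesis using h by (simp add: ipow_cancel_neg[OF assms(1)])
qed

lemma rel_holds_normal_form:
  fixes a b :: "real \<Rightarrow> real"
  assumes a: "bij a" "mono a" and b: "bij b" "mono b"
    and "2 * k \<le> \<omega>" and "rel_holds \<omega> m k a b"
  obtains X where "bij X" "mono X"
    "(b \<circ> a) ^^ k \<circ> b = X ^^ m \<circ> a \<circ> (b \<circ> a) ^^ k"
    "X ^^ Suc (m * (\<omega> - k)) = (b \<circ> a) ^^ k \<circ> b ^^ (\<omega> - 2 * k)"
proof -
  define c where "c = (b \<circ> a) ^^ k"
  define Z where "Z = (a \<circ> b) ^^ k \<circ> a"
  define Y where "Y = ipow (b \<circ> a) (int k) \<circ> b \<circ> ipow a (-1) \<circ> ipow (a \<circ> b) (- int k)"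
  define X where "X = ipow (b \<circ> a) (int k) \<circ> ipow b (int \<omega> - 2 * int k) \<circ> ipow Y (- int \<omega> + int k)"
  have X_eq: "X = c \<circ> b ^^ (\<omega> - 2 * k) \<circ> ipow Y (- int (\<omega> - k))"
  proof -
    have "int \<omega> - 2 * int k = int (\<omega> - 2 * k)" and "- int \<omega> + int k = - int (\<omega> - k)"
      using assms(5) by simp_all
    then show ?thesis unfolding X_def c_def by (simp only: ipow_of_nat)
  qed
  have "ipow (b \<circ> a) (int k) \<circ> b = ipow X (int m) \<circ> ipow (a \<circ> b) (int k) \<circ> a"
    using assms(6) unfolding rel_holds_def Let_def X_def Y_def .
  then have rel: "c \<circ> b = X ^^ m \<circ> Z"
    unfolding Z_def c_def by (simp add: comp_assoc)
  have bij_ab: "bij (b \<circ> a)" "bij (a \<circ> b)" using a b bij_comp by blast+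
  have mono_ab: "mono (b \<circ> a)" "mono (a \<circ> b)" using a b by (simp_all add: mono_comp)
  have "bij Y" unfolding Y_def using bij_ipow bij_ab a b bij_comp by metis
  have "mono Y" unfolding Y_def by (intro mono_comp mono_ipow bij_ab mono_ab a b)
  have "bij Z" unfolding Z_def using bij_ab a bij_comp bij_betw_funpow by metis
  have "Y (Z x) = c (b x)" for x
    unfolding Y_def Z_def c_def
    using ipow_neg_cancel[OF bij_ab(2), of "int k"] ipow_neg_cancel[OF a(1), of 1]
    by (simp add: ipow_1)
  with rel have "Y \<circ> Z = X ^^ m \<circ> Z" by (simp add: fun_eq_iff)
  with \<open>bij Z\<close> have Y_eq: "Y = X ^^ m"
    by (metis bij_is_surj surj_iff comp_assoc comp_id)
  show ?thesis
  proof
    show "bij X" unfolding X_eq c_def using bij_ab b \<open>bij Y\<close> bij_ipow bij_betw_funpow bij_comp by metis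
    show "mono X" unfolding X_eq c_def
      by (intro mono_comp mono_pow mono_ipow mono_ab b \<open>bij Y\<close> \<open>mono Y\<close>)
    show "(b \<circ> a) ^^ k \<circ> b = X ^^ m \<circ> a \<circ> (b \<circ> a) ^^ k"
      using rel unfolding Z_def c_def by (simp add: funpow_comp_swap comp_assoc)
    have "X ^^ (m * (\<omega> - k)) = ipow Y (int (\<omega> - k))"
      by (simp add: Y_eq funpow_mult)
    then show "X ^^ Suc (m * (\<omega> - k)) = (b \<circ> a) ^^ k \<circ> b ^^ (\<omega> - 2 * k)"
      unfolding X_eq c_def
      by (simp add: fun_eq_iff ipow_neg_cancel[OF \<open>bij Y\<close>] del: ipow_of_nat)
  qed
qed

lemma conjugate_of_relations:
  assumes "bij X"
    and rel: "c \<circ> b = X ^^ m \<circ> a \<circ> c" and pow: "X ^^ N = c \<circ> b ^^ n"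
  shows "b = ipow X (- int N) \<circ> ipow X (int m) \<circ> a \<circ> ipow X (int N)"
proof
  fix x
  have "(X ^^ N) (b x) = c (b ((b ^^ n) x))" using pow by (simp add: funpow_swap1)
  also have "\<dots> = (X ^^ m) (a ((X ^^ N) x))" using rel pow by (metis comp_apply)
  finally have "ipow X (int N) (b x) = ipow X (int m) (a (ipow X (int N) x))" by simp
  then show "b x = (ipow X (- int N) \<circ> ipow X (int m) \<circ> a \<circ> ipow X (int N)) x"
    by (metis comp_apply ipow_neg_cancel[OF assms(1)])
qed

lemma expanding_of_relations:
  fixes X :: "real \<Rightarrow> real"
  assumes X: "bij X" "mono X" and a: "mono a" "\<And>t. t \<le> a t"
    and rel: "(b \<circ> a) ^^ k \<circ> b = X ^^ m \<circ> a \<circ> (b \<circ> a) ^^ k"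
    and pow: "X ^^ Suc (m * (k + n)) = (b \<circ> a) ^^ k \<circ> b ^^ n"
  shows "t \<le> X t"
proof -
  have step_b: "above_ipow X (e + int m) (g \<circ> b)" if "above_ipow X e g" for e g
    using above_ipow_comp_conjugate[OF X a that, of "int m" "int (Suc (m * (k + n)))"]
    unfolding conjugate_of_relations[OF X(1) rel pow, symmetric] .
  have step_ba: "above_ipow X (e + int m) (g \<circ> (b \<circ> a))" if "above_ipow X e g" for e g
    using above_ipow_comp_expanding[OF X a step_b[OF that]] by (simp add: comp_assoc)
  have "above_ipow X (0 + int k * int m) (id \<circ> (b \<circ> a) ^^ k)"
    by (rule above_ipow_comp_funpow[OF step_ba above_ipow_id])
  then have "above_ipow X (0 + int k * int m + int n * int m) (id \<circ> (b \<circ> a) ^^ k \<circ> b ^^ n)"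
    using above_ipow_comp_funpow[OF step_b] by blast
  moreover have "0 + int k * int m + int n * int m = int (m * (k + n))"
    by (simp add: algebra_simps)
  moreover have "id \<circ> (b \<circ> a) ^^ k \<circ> b ^^ n = ipow X (int (m * (k + n)) + 1)"
    using pow by (metis ipow_of_nat of_nat_Suc add.commute id_comp)
  ultimately have "above_ipow X (int (m * (k + n))) (ipow X (int (m * (k + n)) + 1))"
    by (simp only:)
  then show ?thesis by (rule expanding_if_above_ipow_succ[OF X(1)])
qed

theorem mainTheorem10:
  fixes \<omega> m k :: nat and a b :: "real \<Rightarrow> real"
  assumes "\<omega> \<ge> 3" and "1 \<le> k" and "k \<le> (\<omega> - 2) div 2"
    and "a \<in> homeo_plus" and "b \<in> homeo_plus"
    and "rel_holds \<omega> m k a b"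
    and "\<forall>t. a t > t"
  shows "\<forall>t. b t \<ge> t"
proof -
  have a: "bij a" "mono a" and b: "bij b" "mono b"
    using assms(4,5) homeo_plus_bij homeo_plus_mono by auto
  from assms(7) have a_ge: "t \<le> a t" for t by (simp add: less_imp_le)
  have "2 * k \<le> \<omega>" using assms(3) by presburger
  then have \<omega>_minus_k: "\<omega> - k = k + (\<omega> - 2 * k)" by simp
  define c where "c = (b \<circ> a) ^^ k"
  obtain X where X: "bij X" "mono X" and rel: "c \<circ> b = X ^^ m \<circ> a \<circ> c"
    and pow: "X ^^ Suc (m * (k + (\<omega> - 2 * k))) = c \<circ> b ^^ (\<omega> - 2 * k)"
    using rel_holds_normal_form[OF a b \<open>2 * k \<le> \<omega>\<close> assms(6)] unfolding c_def \<omega>_minus_k by blast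
  have X_m: "t \<le> (X ^^ m) t" for t
    using expanding_of_relations[OF X a(2) a_ge rel[unfolded c_def] pow[unfolded c_def]]
    by (rule funpow_expanding)
  have "mono c" unfolding c_def by (intro mono_pow mono_comp a b)
  show ?thesis
  proof (intro allI, rule ccontr)
    fix t assume "\<not> t \<le> b t"
    with \<open>mono c\<close> have "c (b t) \<le> c t" by (simp add: monoD)
    also have "\<dots> < a (c t)" using assms(7) by simp
    also have "\<dots> \<le> (X ^^ m) (a (c t))" by (rule X_m)
    also have "\<dots> = c (b t)" using rel by (simp add: fun_eq_iff)
    finally show False by simp
  qed
qed

end
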